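(* Let $n\ge3$, let $x_1,\dots,x_n$ be distinct points of $\mathbb{CP}^1$ and let $0<\alpha_i<1$ be real numbers satisfying $\sum_{i}(1-\alpha_i) < 2$ and, for every $1\le j\le n$, $1-\alpha_j < \sum_{i\ne j}(1-\alpha_i)$. Put $a_{i1} = \frac{1-\alpha_i}{2}$ and $a_{i2}=\frac{1+\alpha_i}{2}$. Let $E=\mathcal{O}(1)\oplus\mathcal{O}(n-1)$ over $\mathbb{CP}^1$ and let $F_i\subset E_{x_i}$ be lines such that (i) $F_i\cap \mathcal{O}(n-1)_{x_i}=0$ for all $i$, and (ii) there is no degree $1$ line subbundle $L\subset E$ with $F_i\subset L_{x_i}$ for all $i$. Then the parabolic bundle $E_*$ with flags $F_i$ and weights $a_{i1}<a_{i2}$ at $x_i$ is stable: for every holomorphic line subbundle $L\subset E$, $$\mathrm{pardeg}\, L_* := \deg L - \sum_{i:\,F_i\subset L_{x_i}} a_{i1} - \sum_{i:\,F_i\not\subset L_{x_i}} a_{i2} < 0 .$$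
   Context: The parabolic structure on $E$ is: at each $x_i$, the line $F_i$ carries the smaller weight $a_{i1}$ and the quotient $E_{x_i}/F_i$ carries the larger weight $a_{i2}$; the parabolic degree of $E_*$ is $\deg E - \sum_i (a_{i1}+a_{i2}) = 0$. The induced parabolic structure on a line subbundle $L$ has weight $a_{i1}$ at $x_i$ if $F_i\subset L_{x_i}$ and $a_{i2}$ otherwise, giving the displayed formula for $\mathrm{pardeg}\,L_*$. *)

theory Defs
  imports Complex_Main
begin

text \<open>A point of CP^1 is given by a nonzero representative (s,t) in C^2 of homogeneous
  coordinates.  Using the standard trivialisations by homogeneous coordinates, the
  fibre of O(a) + O(b) at a point with fixed representative (s,t) is identified with C^2.\<close>

definition proj_point :: "complex \<times> complex \<Rightarrow> bool" where
  "proj_point x \<longleftrightarrow> x \<noteq> (0, 0)"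

definition same_proj_point :: "complex \<times> complex \<Rightarrow> complex \<times> complex \<Rightarrow> bool" where
  "same_proj_point x y \<longleftrightarrow> fst x * snd y = snd x * fst y"

definition homog :: "int \<Rightarrow> (complex \<times> complex \<Rightarrow> complex) \<Rightarrow> bool" where
  "homog k f \<longleftrightarrow>
     (if k < 0 then f = (\<lambda>_. 0)
      else (\<exists>c :: nat \<Rightarrow> complex.
              f = (\<lambda>(s, t). \<Sum>j\<le>nat k. c j * s ^ j * t ^ (nat k - j))))"

text \<open>A holomorphic line subbundle L of degree d of E = O(1) + O(n-1) over CP^1 is the image
  of an everywhere injective bundle map O(d) -> O(1) + O(n-1), i.e. a pair (p,q) of
  homogeneous polynomials of degrees 1-d and n-1-d without common zero on CP^1.
  Its fibre at x is the line spanned by (p x, q x).\<close>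
definition line_subbundle ::
  "nat \<Rightarrow> int \<Rightarrow> (complex \<times> complex \<Rightarrow> complex) \<Rightarrow> (complex \<times> complex \<Rightarrow> complex) \<Rightarrow> bool" where
  "line_subbundle n d p q \<longleftrightarrow>
     homog (1 - d) p \<and> homog (int n - 1 - d) q \<and>
     (\<forall>x. proj_point x \<longrightarrow> (p x, q x) \<noteq> (0, 0))"

text \<open>The line spanned by the nonzero vector f in the fibre E_x lies in the fibre L_x.\<close>
definition line_in_fibre ::
  "complex \<times> complex \<Rightarrow> (complex \<times> complex \<Rightarrow> complex) \<Rightarrow> (complex \<times> complex \<Rightarrow> complex)
     \<Rightarrow> complex \<times> complex \<Rightarrow> bool" where
  "line_in_fibre f p q x \<longleftrightarrow> fst f * q x = snd f * p x"

definition pardeg ::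
  "nat \<Rightarrow> (nat \<Rightarrow> complex \<times> complex) \<Rightarrow> (nat \<Rightarrow> complex \<times> complex)
     \<Rightarrow> (nat \<Rightarrow> real) \<Rightarrow> (nat \<Rightarrow> real) \<Rightarrow> int
     \<Rightarrow> (complex \<times> complex \<Rightarrow> complex) \<Rightarrow> (complex \<times> complex \<Rightarrow> complex) \<Rightarrow> real" where
  "pardeg n x F a1 a2 d p q =
     real_of_int d
     - (\<Sum>i\<in>{i\<in>{1..n}. line_in_fibre (F i) p q (x i)}. a1 i)
     - (\<Sum>i\<in>{i\<in>{1..n}. \<not> line_in_fibre (F i) p q (x i)}. a2 i)"

end

theory Submission
  imports Defs
begin

text \<open>Let B = sum_i (1 - alpha_i), so 0 < B < 2, and let S be the set of points x_i with
  F_i not contained in L. Since a_i2 - a_i1 = alpha_i, the parabolic degree of L equals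
  deg L - B/2 - sum_{i in S} alpha_i. For deg L <= 0 this is at most -B/2 < 0. For deg L = 1,
  condition (ii) yields some j in S, and 1 - alpha_j < sum_{i /= j} (1 - alpha_i) means
  B/2 > 1 - alpha_j, so the parabolic degree is below 1 - (1 - alpha_j) - alpha_j = 0.
  For deg L >= 2 there is no nonzero map O(deg L) -> O(1), so L lies in O(n-1); hence
  deg L <= n - 1 and, by condition (i), S contains every point, so the parabolic degree is
  deg L - n + B/2 < deg L - n + 1 <= 0.\<close>

lemma pardeg_eq_sum_weight_jumps:
  "pardeg n x F a1 a2 d p q =
     real_of_int d - (\<Sum>i\<in>{1..n}. a1 i)
     - (\<Sum>i\<in>{i\<in>{1..n}. \<not> line_in_fibre (F i) p q (x i)}. a2 i - a1 i)"
proof -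
  let ?P = "\<lambda>i. line_in_fibre (F i) p q (x i)"
  have "(\<Sum>i\<in>{i\<in>{1..n}. ?P i}. a1 i) + (\<Sum>i\<in>{i\<in>{1..n}. \<not> ?P i}. a1 i)
      = (\<Sum>i\<in>{i\<in>{1..n}. ?P i} \<union> {i\<in>{1..n}. \<not> ?P i}. a1 i)"
    by (rule sum.union_disjoint[symmetric]) auto
  also have "{i\<in>{1..n}. ?P i} \<union> {i\<in>{1..n}. \<not> ?P i} = {1..n}"
    by blast
  finally show ?thesis
    unfolding pardeg_def sum_subtractf by linarith
qed

lemma pardeg_symmetric_weights:
  "pardeg n x F (\<lambda>i. (1 - \<alpha> i) / 2) (\<lambda>i. (1 + \<alpha> i) / 2) d p q =
     real_of_int d - (\<Sum>i\<in>{1..n}. 1 - \<alpha> i) / 2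
     - (\<Sum>i\<in>{i\<in>{1..n}. \<not> line_in_fibre (F i) p q (x i)}. \<alpha> i)"
proof -
  have "(1 + \<alpha> i) / 2 - (1 - \<alpha> i) / 2 = \<alpha> i" for i
    by (simp add: field_simps)
  then show ?thesis
    by (simp add: pardeg_eq_sum_weight_jumps sum_divide_distrib)
qed

lemma line_subbundle_degree_le:
  assumes "line_subbundle n d p q"
  shows "d \<le> max 1 (int n - 1)"
proof (rule ccontr)
  assume "\<not> ?thesis"
  then have "p = (\<lambda>_. 0)" and "q = (\<lambda>_. 0)"
    using assms by (auto simp: line_subbundle_def homog_def)
  moreover have "proj_point (1, 0)" by (simp add: proj_point_def)
  ultimately show False
    using assms by (auto simp: line_subbundle_def)
qed

lemma line_subbundle_first_component_zero:
  assumes "line_subbundle n d p q" and "d > 1"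
  shows "p = (\<lambda>_. 0)"
  using assms by (simp add: line_subbundle_def homog_def)

lemma line_subbundle_avoids_transversal_lines:
  assumes "line_subbundle n d p q" and "d > 1" and "proj_point y" and "fst f \<noteq> 0"
  shows "\<not> line_in_fibre f p q y"
proof -
  have "p = (\<lambda>_. 0)"
    using assms(1,2) by (rule line_subbundle_first_component_zero)
  moreover have "(p y, q y) \<noteq> (0, 0)"
    using assms(1,3) unfolding line_subbundle_def by blast
  ultimately show ?thesis
    using assms(4) by (simp add: line_in_fibre_def)
qed

theorem mainTheorem3:
  fixes n :: nat and x :: "nat \<Rightarrow> complex \<times> complex" and F :: "nat \<Rightarrow> complex \<times> complex"
    and \<alpha> :: "nat \<Rightarrow> real"
  assumes n3: "n \<ge> 3"
    and pts: "\<forall>i\<in>{1..n}. proj_point (x i)"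
    and distinct: "\<forall>i\<in>{1..n}. \<forall>j\<in>{1..n}. i \<noteq> j \<longrightarrow> \<not> same_proj_point (x i) (x j)"
    and alpha: "\<forall>i\<in>{1..n}. 0 < \<alpha> i \<and> \<alpha> i < 1"
    and sum_lt: "(\<Sum>i\<in>{1..n}. 1 - \<alpha> i) < 2"
    and tri: "\<forall>j\<in>{1..n}. 1 - \<alpha> j < (\<Sum>i\<in>{1..n} - {j}. 1 - \<alpha> i)"
    and Fnz: "\<forall>i\<in>{1..n}. F i \<noteq> (0, 0)"
    and Fi: "\<forall>i\<in>{1..n}. fst (F i) \<noteq> 0"
    and Fii: "\<not> (\<exists>p q. line_subbundle n 1 p q \<and>
                       (\<forall>i\<in>{1..n}. line_in_fibre (F i) p q (x i)))"
  shows "\<forall>d p q. line_subbundle n d p q \<longrightarrow>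
           pardeg n x F (\<lambda>i. (1 - \<alpha> i) / 2) (\<lambda>i. (1 + \<alpha> i) / 2) d p q < 0"
proof (intro allI impI)
  fix d p q assume L: "line_subbundle n d p q"
  define B where "B = (\<Sum>i\<in>{1..n}. 1 - \<alpha> i)"
  define S where "S = {i\<in>{1..n}. \<not> line_in_fibre (F i) p q (x i)}"
  have pardeg_L: "pardeg n x F (\<lambda>i. (1 - \<alpha> i) / 2) (\<lambda>i. (1 + \<alpha> i) / 2) d p q
      = real_of_int d - B / 2 - (\<Sum>i\<in>S. \<alpha> i)"
    unfolding B_def S_def by (rule pardeg_symmetric_weights)
  consider "d \<le> 0" | "d = 1" | "d \<ge> 2" by linarith
  then show "pardeg n x F (\<lambda>i. (1 - \<alpha> i) / 2) (\<lambda>i. (1 + \<alpha> i) / 2) d p q < 0"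
  proof cases
    case 1
    have "B > 0"
      unfolding B_def using n3 alpha by (intro sum_pos) simp_all
    moreover have "(\<Sum>i\<in>S. \<alpha> i) \<ge> 0"
      using alpha by (intro sum_nonneg) (auto simp: S_def less_imp_le)
    ultimately show ?thesis
      using pardeg_L 1 by simp
  next
    case 2
    then obtain j where j: "j \<in> S"
      using Fii L unfolding S_def by blast
    have "\<alpha> j \<le> (\<Sum>i\<in>S. \<alpha> i)"
      using alpha j by (intro member_le_sum) (auto simp: S_def less_imp_le)
    moreover have "B = (1 - \<alpha> j) + (\<Sum>i\<in>{1..n} - {j}. 1 - \<alpha> i)"
      unfolding B_def using j by (intro sum.remove) (auto simp: S_def)
    moreover have "1 - \<alpha> j < (\<Sum>i\<in>{1..n} - {j}. 1 - \<alpha> i)"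
      using tri j by (simp add: S_def)
    ultimately show ?thesis
      using pardeg_L 2 by linarith
  next
    case 3
    have "\<forall>i\<in>{1..n}. \<not> line_in_fibre (F i) p q (x i)"
      using line_subbundle_avoids_transversal_lines[OF L] 3 pts Fi by simp
    then have "S = {1..n}"
      by (auto simp: S_def)
    then have "(\<Sum>i\<in>S. \<alpha> i) = n - B"
      by (simp add: B_def sum_subtractf)
    then show ?thesis
      using pardeg_L sum_lt line_subbundle_degree_le[OF L] 3 by (simp add: B_def)
  qed
qed

end
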